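(* Let $f=\frac1n\sum_{i=1}^n f_i$ where each $f_i:\mathbb{R}^d\to\mathbb{R}$ is differentiable, bounded from below by $f_i^{\mathrm{inf}}$, and $L_i$-smooth in the sense that $f_i(y)\le f_i(x)+\langle\nabla f_i(x),y-x\rangle+\frac{L_i}{2}\|y-x\|^2$ for all $x,y$. Let $f^{\mathrm{inf}}=\inf_x f(x)$ and $\Delta^{\mathrm{inf}}=\frac1n\sum_{i=1}^n (f^{\mathrm{inf}}-f_i^{\mathrm{inf}})$. Let $v=(v_1,\dots,v_n)$ be a random vector with $\mathbb{E}[v_i]=1$ and $\mathbb{E}[v_i^2]<\infty$ for all $i$, and define $g(x)=\frac1n\sum_{i=1}^n v_i\nabla f_i(x)$. Then $\Delta^{\mathrm{inf}}\ge 0$ and for all $x\in\mathbb{R}^d$, $$\mathbb{E}\|g(x)\|^2\le 2A\,(f(x)-f^{\mathrm{inf}})+B\|\nabla f(x)\|^2+C$$ with $A=\max_i L_i\mathbb{E}[v_i^2]$, $B=0$, $C=2A\Delta^{\mathrm{inf}}$. *)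

theory Defs
  imports "HOL-Probability.Probability"
begin

definition grad :: "('a::euclidean_space \<Rightarrow> real) \<Rightarrow> 'a \<Rightarrow> 'a" where
  "grad f x = (THE G. (f has_derivative (\<lambda>h. G \<bullet> h)) (at x))"

end

theory Submission
  imports Defs
begin

text \<open>Evaluating the smoothness inequality of \<open>f\<^sub>i\<close> at \<open>y = x - \<nabla>f\<^sub>i(x) / L\<^sub>i\<close> and using
  \<open>f\<^sub>i(y) \<ge> inf f\<^sub>i\<close> gives \<open>\<parallel>\<nabla>f\<^sub>i(x)\<parallel>\<^sup>2 \<le> 2 L\<^sub>i (f\<^sub>i(x) - inf f\<^sub>i)\<close>. By the Cauchy-Schwarz
  inequality \<open>\<parallel>g(x)\<parallel>\<^sup>2 \<le> (1/n) \<Sum> v\<^sub>i\<^sup>2 \<parallel>\<nabla>f\<^sub>i(x)\<parallel>\<^sup>2\<close>, so after taking expectations and bounding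
  every \<open>L\<^sub>i E[v\<^sub>i\<^sup>2]\<close> by \<open>A\<close> one gets
  \<open>E\<parallel>g(x)\<parallel>\<^sup>2 \<le> 2A (1/n) \<Sum> (f\<^sub>i(x) - inf f\<^sub>i) = 2A (f(x) - inf f) + 2A \<Delta>\<close>,
  and \<open>\<Delta> \<ge> 0\<close> because the average of the \<open>inf f\<^sub>i\<close> is a lower bound of \<open>f\<close>.\<close>

lemma smoothness_constant_nonneg:
  fixes F :: "'a::euclidean_space \<Rightarrow> real" and G :: "'a \<Rightarrow> 'a"
  assumes lb: "\<And>y. m \<le> F y"
    and smooth: "\<And>u w. F w \<le> F u + G u \<bullet> (w - u) + L / 2 * (norm (w - u))\<^sup>2"
  shows "0 \<le> L"
proof (rule ccontr)
  assume "\<not> 0 \<le> L"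
  obtain b :: 'a where b: "b \<in> Basis" using nonempty_Basis by blast
  have two_sided: "2 * m \<le> 2 * F 0 + L * t\<^sup>2" for t
  proof -
    have "F (t *\<^sub>R b) \<le> F 0 + t * (G 0 \<bullet> b) + L / 2 * t\<^sup>2"
      using smooth[where u=0 and w="t *\<^sub>R b"] b by (simp add: power_mult_distrib)
    moreover have "F (- (t *\<^sub>R b)) \<le> F 0 - t * (G 0 \<bullet> b) + L / 2 * t\<^sup>2"
      using smooth[where u=0 and w="- (t *\<^sub>R b)"] b by (simp add: power_mult_distrib)
    ultimately show ?thesis using lb[of "t *\<^sub>R b"] lb[of "- (t *\<^sub>R b)"] by linarith
  qed
  define s where "s = 2 * (F 0 - m) / (- L) + 1"
  have "0 \<le> s" using lb[of 0] \<open>\<not> 0 \<le> L\<close> by (simp add: s_def)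
  then have "2 * m \<le> 2 * F 0 + L * s" using two_sided[of "sqrt s"] by simp
  also have "\<dots> = 2 * m + L" using \<open>\<not> 0 \<le> L\<close> by (simp add: s_def field_simps)
  finally show False using \<open>\<not> 0 \<le> L\<close> by simp
qed

lemma norm_sq_le_of_smooth_bounded_below:
  fixes F :: "'a::euclidean_space \<Rightarrow> real" and G :: "'a \<Rightarrow> 'a"
  assumes lb: "\<And>y. m \<le> F y"
    and smooth: "\<And>u w. F w \<le> F u + G u \<bullet> (w - u) + L / 2 * (norm (w - u))\<^sup>2"
  shows "(norm (G x))\<^sup>2 \<le> 2 * L * (F x - m)"
proof -
  define N where "N = (norm (G x))\<^sup>2"
  have descent: "m \<le> F x - t * N + L / 2 * t\<^sup>2 * N" for t
  proof -
    have "m \<le> F (x - t *\<^sub>R G x)" by (rule lb)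
    also have "\<dots> \<le> F x + G x \<bullet> (- (t *\<^sub>R G x)) + L / 2 * (norm (t *\<^sub>R G x))\<^sup>2"
      using smooth[where u=x and w="x - t *\<^sub>R G x"] by simp
    also have "\<dots> = F x - t * N + L / 2 * t\<^sup>2 * N"
      by (simp add: N_def power_mult_distrib power2_norm_eq_inner)
    finally show ?thesis .
  qed
  consider "L = 0" | "0 < L" using smoothness_constant_nonneg[OF lb smooth] by linarith
  then show ?thesis
  proof cases
    case 1
    have "N \<le> 0"
    proof (rule ccontr)
      assume "\<not> N \<le> 0"
      then show False using descent[of "(F x - m + 1) / N"] 1 by simp
    qed
    then show ?thesis using 1 by (simp add: N_def)
  next
    case 2
    have "m \<le> F x - N / (2 * L)"
      using descent[of "1 / L"] 2 by (simp add: field_simps power2_eq_square)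
    then show ?thesis using 2 by (simp add: N_def field_simps)
  qed
qed

lemma norm_sum_squared_le:
  fixes a :: "'i \<Rightarrow> 'a::real_normed_vector"
  shows "(norm (\<Sum>i\<in>I. a i))\<^sup>2 \<le> real (card I) * (\<Sum>i\<in>I. (norm (a i))\<^sup>2)"
proof -
  have "(norm (\<Sum>i\<in>I. a i))\<^sup>2 \<le> (\<Sum>i\<in>I. norm (a i))\<^sup>2"
    by (intro power_mono norm_sum) auto
  also have "\<dots> \<le> (\<Sum>i\<in>I. (norm (a i))\<^sup>2) * real (card I)"
    by (rule sum_squared_le_sum_of_squares)
  finally show ?thesis by (simp add: mult.commute)
qed

lemma integral_norm_sq_weighted_mean_le:
  fixes v :: "'w \<Rightarrow> nat \<Rightarrow> real" and G :: "nat \<Rightarrow> 'a::real_normed_vector"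
  assumes sq_int: "\<And>i. i < n \<Longrightarrow> integrable M (\<lambda>\<omega>. (v \<omega> i)\<^sup>2)"
  shows "(\<integral>\<omega>. (norm ((1 / real n) *\<^sub>R (\<Sum>i<n. v \<omega> i *\<^sub>R G i)))\<^sup>2 \<partial>M)
    \<le> (1 / real n) * (\<Sum>i<n. (\<integral>\<omega>. (v \<omega> i)\<^sup>2 \<partial>M) * (norm (G i))\<^sup>2)"
proof -
  have pointwise: "(norm ((1 / real n) *\<^sub>R (\<Sum>i<n. v \<omega> i *\<^sub>R G i)))\<^sup>2
      \<le> (1 / real n) * (\<Sum>i<n. (v \<omega> i)\<^sup>2 * (norm (G i))\<^sup>2)" for \<omega>
  proof -
    have "(norm ((1 / real n) *\<^sub>R (\<Sum>i<n. v \<omega> i *\<^sub>R G i)))\<^sup>2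
        = (1 / real n)\<^sup>2 * (norm (\<Sum>i<n. v \<omega> i *\<^sub>R G i))\<^sup>2"
      by (simp add: power_divide)
    also have "\<dots> \<le> (1 / real n)\<^sup>2 * (real n * (\<Sum>i<n. (norm (v \<omega> i *\<^sub>R G i))\<^sup>2))"
      using norm_sum_squared_le[of "\<lambda>i. v \<omega> i *\<^sub>R G i" "{..<n}"]
      by (intro mult_left_mono) auto
    also have "\<dots> = (1 / real n) * (\<Sum>i<n. (v \<omega> i)\<^sup>2 * (norm (G i))\<^sup>2)"
      by (simp add: power_mult_distrib power2_eq_square[of "1 / real n"])
    finally show ?thesis .
  qed
  have "(\<integral>\<omega>. (norm ((1 / real n) *\<^sub>R (\<Sum>i<n. v \<omega> i *\<^sub>R G i)))\<^sup>2 \<partial>M)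
      \<le> (\<integral>\<omega>. (1 / real n) * (\<Sum>i<n. (v \<omega> i)\<^sup>2 * (norm (G i))\<^sup>2) \<partial>M)"
    using sq_int pointwise
    by (intro integral_mono' integrable_mult_right integrable_sum integrable_mult_left)
      (auto intro!: sum_nonneg divide_nonneg_nonneg)
  also have "\<dots> = (1 / real n) * (\<Sum>i<n. (\<integral>\<omega>. (v \<omega> i)\<^sup>2 \<partial>M) * (norm (G i))\<^sup>2)"
    using sq_int by (simp add: integral_sum)
  finally show ?thesis .
qed

lemma integral_norm_sq_weighted_mean_grad_le:
  fixes F :: "nat \<Rightarrow> 'a::euclidean_space \<Rightarrow> real" and G :: "nat \<Rightarrow> 'a \<Rightarrow> 'a"
    and v :: "'w \<Rightarrow> nat \<Rightarrow> real"
  assumes lb: "\<And>i y. i < n \<Longrightarrow> m i \<le> F i y"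
    and smooth: "\<And>i u w. i < n \<Longrightarrow>
        F i w \<le> F i u + G i u \<bullet> (w - u) + L i / 2 * (norm (w - u))\<^sup>2"
    and sq_int: "\<And>i. i < n \<Longrightarrow> integrable M (\<lambda>\<omega>. (v \<omega> i)\<^sup>2)"
    and A_ge: "\<And>i. i < n \<Longrightarrow> L i * (\<integral>\<omega>. (v \<omega> i)\<^sup>2 \<partial>M) \<le> A"
  shows "(\<integral>\<omega>. (norm ((1 / real n) *\<^sub>R (\<Sum>i<n. v \<omega> i *\<^sub>R G i x)))\<^sup>2 \<partial>M)
    \<le> 2 * A * ((1 / real n) * (\<Sum>i<n. F i x - m i))"
proof -
  have term_le: "(\<integral>\<omega>. (v \<omega> i)\<^sup>2 \<partial>M) * (norm (G i x))\<^sup>2 \<le> 2 * A * (F i x - m i)"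
    if i: "i < n" for i
  proof -
    have "(\<integral>\<omega>. (v \<omega> i)\<^sup>2 \<partial>M) * (norm (G i x))\<^sup>2
        \<le> (\<integral>\<omega>. (v \<omega> i)\<^sup>2 \<partial>M) * (2 * L i * (F i x - m i))"
      using norm_sq_le_of_smooth_bounded_below[OF lb[OF i] smooth[OF i]]
      by (intro mult_left_mono) auto
    also have "\<dots> = 2 * (L i * (\<integral>\<omega>. (v \<omega> i)\<^sup>2 \<partial>M)) * (F i x - m i)"
      by (simp add: algebra_simps)
    also have "\<dots> \<le> 2 * A * (F i x - m i)"
      using A_ge[OF i] lb[OF i, of x] by (intro mult_right_mono) auto
    finally show ?thesis .
  qed
  have "(\<integral>\<omega>. (norm ((1 / real n) *\<^sub>R (\<Sum>i<n. v \<omega> i *\<^sub>R G i x)))\<^sup>2 \<partial>M)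
      \<le> (1 / real n) * (\<Sum>i<n. (\<integral>\<omega>. (v \<omega> i)\<^sup>2 \<partial>M) * (norm (G i x))\<^sup>2)"
    using sq_int by (rule integral_norm_sq_weighted_mean_le)
  also have "\<dots> \<le> (1 / real n) * (\<Sum>i<n. 2 * A * (F i x - m i))"
    using term_le by (intro mult_left_mono sum_mono) auto
  finally show ?thesis by (simp add: sum_distrib_left mult.assoc)
qed

theorem proposition2:
  fixes n :: nat
    and fs :: "nat \<Rightarrow> 'a::euclidean_space \<Rightarrow> real"
    and L :: "nat \<Rightarrow> real"
    and M :: "'w measure"
    and v :: "'w \<Rightarrow> nat \<Rightarrow> real"
  assumes n_pos: "n \<ge> 1"
    and diff: "\<And>i x. i < n \<Longrightarrow> fs i differentiable (at x)"
    and bdd: "\<And>i. i < n \<Longrightarrow> bdd_below (range (fs i))"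
    and smooth: "\<And>i x y. i < n \<Longrightarrow>
        fs i y \<le> fs i x + grad (fs i) x \<bullet> (y - x) + L i / 2 * (norm (y - x))\<^sup>2"
    and prob: "prob_space M"
    and meas: "\<And>i. i < n \<Longrightarrow> (\<lambda>\<omega>. v \<omega> i) \<in> borel_measurable M"
    and int1: "\<And>i. i < n \<Longrightarrow> integrable M (\<lambda>\<omega>. v \<omega> i)"
    and mean1: "\<And>i. i < n \<Longrightarrow> prob_space.expectation M (\<lambda>\<omega>. v \<omega> i) = 1"
    and sq_int: "\<And>i. i < n \<Longrightarrow> integrable M (\<lambda>\<omega>. (v \<omega> i)\<^sup>2)"
  defines "f \<equiv> (\<lambda>x. (1 / real n) * (\<Sum>i<n. fs i x))"
    and "finf \<equiv> Inf (range (\<lambda>x. (1 / real n) * (\<Sum>i<n. fs i x)))"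
    and "Delta \<equiv> (1 / real n) * (\<Sum>i<n. Inf (range (\<lambda>x. (1 / real n) * (\<Sum>i<n. fs i x))) - Inf (range (fs i)))"
    and "g \<equiv> (\<lambda>\<omega> x. (1 / real n) *\<^sub>R (\<Sum>i<n. v \<omega> i *\<^sub>R grad (fs i) x))"
    and "A \<equiv> Max ((\<lambda>i. L i * prob_space.expectation M (\<lambda>\<omega>. (v \<omega> i)\<^sup>2)) ` {..<n})"
    and "B \<equiv> (0::real)"
    and "C \<equiv> 2 * Max ((\<lambda>i. L i * prob_space.expectation M (\<lambda>\<omega>. (v \<omega> i)\<^sup>2)) ` {..<n}) * ((1 / real n) * (\<Sum>i<n. Inf (range (\<lambda>x. (1 / real n) * (\<Sum>i<n. fs i x))) - Inf (range (fs i))))"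
  shows "Delta \<ge> 0 \<and>
    (\<forall>x. prob_space.expectation M (\<lambda>\<omega>. (norm (g \<omega> x))\<^sup>2)
           \<le> 2 * A * (f x - finf) + B * (norm (grad f x))\<^sup>2 + C)"
proof -
  define m where "m i = Inf (range (fs i))" for i
  define mean_m where "mean_m = (1 / real n) * (\<Sum>i<n. m i)"
  have lb: "m i \<le> fs i y" if "i < n" for i y
    unfolding m_def using bdd[OF that] by (rule cInf_lower[OF rangeI])
  have mean_m_le: "mean_m \<le> f y" for y
    unfolding mean_m_def f_def using lb by (intro mult_left_mono sum_mono) auto
  have mean_m_le_finf: "mean_m \<le> finf"
    unfolding finf_def using mean_m_le by (intro cINF_greatest) (auto simp: f_def)
  have Delta_eq: "Delta = finf - mean_m"
    using n_pos unfolding Delta_def finf_def mean_m_def m_def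
    by (simp add: sum_subtractf field_simps)
  have A_ge: "L i * (\<integral>\<omega>. (v \<omega> i)\<^sup>2 \<partial>M) \<le> A" if "i < n" for i
    unfolding A_def using that by (intro Max_ge) auto
  have "(\<integral>\<omega>. (norm (g \<omega> x))\<^sup>2 \<partial>M) \<le> 2 * A * (f x - mean_m)" for x
    using integral_norm_sq_weighted_mean_grad_le[OF lb smooth sq_int A_ge, of n "\<lambda>i. i" x]
    unfolding g_def f_def mean_m_def by (simp add: sum_subtractf right_diff_distrib)
  moreover have "2 * A * (f x - mean_m) = 2 * A * (f x - finf) + C" for x
    unfolding C_def A_def Delta_def[symmetric] Delta_eq by (simp add: algebra_simps)
  ultimately show ?thesis
    using mean_m_le_finf Delta_eq unfolding B_def by simp
qed

end
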